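(* Let $X$ be a Banach space over $\mathbb{K}\in\{\mathbb{R},\mathbb{C}\}$ and let $G_1, G_2 \in L(X)$ with $\|G_1\| = \|G_2\| = 1$. Suppose there exists a function $\phi : (0, 1] \to (0, 1]$ with $\phi(t) \to 1$ as $t \to 1$ such that for every $x \in S_X$ and $t\in(0,1]$, $\|G_1x\| \ge t$ implies $\|G_2x\| \ge \phi(t)$. Then $\|T\|_{G_1} \le \|T\|_{G_2}$ for every $T \in L(X)$.
   Context: $S_X$ is the unit sphere of $X$ and $L(X)$ the bounded linear operators on $X$. For a norm-one $G\in L(X)$, $\|T\|_G := \inf_{\delta>0}\sup\{\|Tx\|: x\in S_X,\ \|Gx\|>1-\delta\}$. *)

theory Defs
  imports "HOL-Analysis.Analysis"
begin

definition G_norm :: "('a::real_normed_vector \<Rightarrow>\<^sub>L 'a) \<Rightarrow> ('a \<Rightarrow>\<^sub>L 'a) \<Rightarrow> real" where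
  "G_norm G T = (INF \<delta>\<in>{0<..}.
      SUP x\<in>{x. norm x = 1 \<and> norm (blinfun_apply G x) > 1 - \<delta>}. norm (blinfun_apply T x))"

end

theory Submission
  imports Defs
begin

text \<open>The hypothesis on \<open>\<phi>\<close> says that every set \<open>{x \<in> S_X. \<parallel>G\<^sub>2 x\<parallel> > 1 - \<delta>}\<close> contains a
  set \<open>{x \<in> S_X. \<parallel>G\<^sub>1 x\<parallel> > 1 - \<delta>'}\<close>: choose \<open>t < 1\<close> with \<open>\<phi> t > 1 - \<delta>\<close> and \<open>\<delta>' = 1 - t\<close>.
  Hence each supremum defining \<open>\<parallel>T\<parallel>\<^sub>G\<^sub>2\<close> dominates one defining \<open>\<parallel>T\<parallel>\<^sub>G\<^sub>1\<close>, and so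
  dominates their infimum.\<close>

definition almost_norming_set :: "('a::real_normed_vector \<Rightarrow>\<^sub>L 'a) \<Rightarrow> real \<Rightarrow> 'a set" where
  "almost_norming_set G \<delta> = {x. norm x = 1 \<and> norm (blinfun_apply G x) > 1 - \<delta>}"

lemma G_norm_eq_INF_SUP:
  "G_norm G T = (INF \<delta>\<in>{0<..}. SUP x\<in>almost_norming_set G \<delta>. norm (blinfun_apply T x))"
  unfolding G_norm_def almost_norming_set_def ..

lemma norm_blinfun_le_of_unit_bound:
  fixes G :: "'a::real_normed_vector \<Rightarrow>\<^sub>L 'b::real_normed_vector"
  assumes "0 \<le> c" and "\<And>x. norm x = 1 \<Longrightarrow> norm (blinfun_apply G x) \<le> c"
  shows "norm G \<le> c"
proof (rule norm_blinfun_bound[OF \<open>0 \<le> c\<close>])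
  fix x :: 'a
  show "norm (blinfun_apply G x) \<le> c * norm x"
  proof (cases "x = 0")
    case False
    have "norm (blinfun_apply G (x /\<^sub>R norm x)) \<le> c"
      using assms(2) False by simp
    with False show ?thesis
      by (simp add: blinfun.scaleR_right divide_simps mult.commute)
  qed simp
qed

lemma exists_unit_almost_norming:
  fixes G :: "'a::real_normed_vector \<Rightarrow>\<^sub>L 'b::real_normed_vector"
  assumes "G \<noteq> 0" and "\<delta> > 0"
  shows "\<exists>x. norm x = 1 \<and> norm (blinfun_apply G x) > norm G - \<delta>"
proof (rule ccontr)
  assume "\<not> ?thesis"
  then have bound: "norm (blinfun_apply G x) \<le> norm G - \<delta>" if "norm x = 1" for x
    using that by force
  from \<open>G \<noteq> 0\<close> obtain y where "blinfun_apply G y \<noteq> 0"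
    by (metis blinfun_eqI zero_blinfun.rep_eq)
  then have "y \<noteq> 0" by (metis blinfun.zero_right)
  then have "norm (y /\<^sub>R norm y) = 1" by simp
  then have "0 \<le> norm G - \<delta>"
    using bound norm_ge_zero order_trans by meson
  then have "norm G \<le> norm G - \<delta>"
    using bound by (rule norm_blinfun_le_of_unit_bound)
  with \<open>\<delta> > 0\<close> show False by simp
qed

lemma almost_norming_set_nonempty:
  assumes "norm G = 1" and "\<delta> > 0"
  shows "almost_norming_set G \<delta> \<noteq> {}"
  using exists_unit_almost_norming[of G \<delta>] assms
  unfolding almost_norming_set_def by fastforce

lemma bdd_above_norm_image_almost_norming_set:
  "bdd_above ((\<lambda>x. norm (blinfun_apply T x)) ` almost_norming_set G \<delta>)"
proof (rule bdd_aboveI2)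
  fix x assume "x \<in> almost_norming_set G \<delta>"
  then show "norm (blinfun_apply T x) \<le> norm T"
    using norm_blinfun[of T x] by (simp add: almost_norming_set_def)
qed

lemma G_norm_mono:
  assumes "norm G1 = 1"
    and subset: "\<And>\<delta>. \<delta> > 0 \<Longrightarrow> \<exists>\<delta>'>0. almost_norming_set G1 \<delta>' \<subseteq> almost_norming_set G2 \<delta>"
  shows "G_norm G1 T \<le> G_norm G2 T"
proof -
  let ?s = "\<lambda>G \<delta>. SUP x\<in>almost_norming_set G \<delta>. norm (blinfun_apply T x)"
  have bdd_below_sups: "bdd_below (?s G1 ` {0<..})"
  proof (rule bdd_belowI2)
    fix \<delta> :: real assume "\<delta> \<in> {0<..}"
    then obtain x where "x \<in> almost_norming_set G1 \<delta>"
      using almost_norming_set_nonempty[OF \<open>norm G1 = 1\<close>] by fastforce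
    then have "norm (blinfun_apply T x) \<le> ?s G1 \<delta>"
      by (rule cSUP_upper[OF _ bdd_above_norm_image_almost_norming_set])
    then show "0 \<le> ?s G1 \<delta>"
      using norm_ge_zero order_trans by blast
  qed
  moreover have "(INF \<delta>'\<in>{0<..}. ?s G1 \<delta>') \<le> ?s G2 \<delta>" if "\<delta> > 0" for \<delta>
  proof -
    obtain \<delta>' where "\<delta>' > 0" and sub: "almost_norming_set G1 \<delta>' \<subseteq> almost_norming_set G2 \<delta>"
      using subset[OF \<open>\<delta> > 0\<close>] by blast
    have "(INF \<delta>'\<in>{0<..}. ?s G1 \<delta>') \<le> ?s G1 \<delta>'"
      by (rule cINF_lower[OF bdd_below_sups]) (simp add: \<open>\<delta>' > 0\<close>)
    also have "\<dots> \<le> ?s G2 \<delta>"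
      using almost_norming_set_nonempty[OF \<open>norm G1 = 1\<close> \<open>\<delta>' > 0\<close>] sub
      by (rule cSUP_subset_mono[OF _ bdd_above_norm_image_almost_norming_set]) simp
    finally show ?thesis .
  qed
  ultimately show ?thesis
    unfolding G_norm_eq_INF_SUP by (intro cINF_greatest) auto
qed

lemma exists_below_one_close_to_limit:
  fixes \<phi> :: "real \<Rightarrow> real"
  assumes "(\<phi> \<longlongrightarrow> 1) (at 1 within {0<..1})" and "\<delta> > 0"
  shows "\<exists>t\<in>{0<..<1}. \<phi> t > 1 - \<delta>"
proof -
  have "at (1::real) within {0<..1} \<noteq> bot"
    by (simp add: trivial_limit_within)
  moreover have "\<forall>\<^sub>F t in at 1 within {0<..1}. t \<in> {0<..<1} \<and> \<phi> t > 1 - \<delta>"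
  proof (rule eventually_conj)
    show "\<forall>\<^sub>F t in at 1 within {0<..1}. (t::real) \<in> {0<..<1}"
      unfolding eventually_at_filter by (rule always_eventually) auto
    show "\<forall>\<^sub>F t in at 1 within {0<..1}. \<phi> t > 1 - \<delta>"
      using tendstoD[OF assms] by (rule eventually_mono) (simp add: dist_real_def)
  qed
  ultimately show ?thesis
    by (blast dest: eventually_happens')
qed

theorem theorem3p14:
  fixes G1 G2 :: "'a::banach \<Rightarrow>\<^sub>L 'a" and \<phi> :: "real \<Rightarrow> real"
  assumes "norm G1 = 1" and "norm G2 = 1"
    and "\<forall>t\<in>{0<..1}. \<phi> t \<in> {0<..1}"
    and "(\<phi> \<longlongrightarrow> 1) (at 1 within {0<..1})"
    and "\<forall>x t. norm x = 1 \<and> t \<in> {0<..1} \<and> norm (blinfun_apply G1 x) \<ge> t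
                 \<longrightarrow> norm (blinfun_apply G2 x) \<ge> \<phi> t"
  shows "\<forall>T :: 'a \<Rightarrow>\<^sub>L 'a. G_norm G1 T \<le> G_norm G2 T"
proof (intro allI G_norm_mono[OF \<open>norm G1 = 1\<close>])
  fix \<delta> :: real assume "\<delta> > 0"
  then obtain t where t: "t \<in> {0<..<1}" and "\<phi> t > 1 - \<delta>"
    using exists_below_one_close_to_limit[OF assms(4)] by blast
  have "almost_norming_set G1 (1 - t) \<subseteq> almost_norming_set G2 \<delta>"
  proof
    fix x assume "x \<in> almost_norming_set G1 (1 - t)"
    then have "norm x = 1" and "norm (blinfun_apply G1 x) \<ge> t"
      by (auto simp: almost_norming_set_def)
    with assms(5) t have "norm (blinfun_apply G2 x) \<ge> \<phi> t" by auto
    with \<open>\<phi> t > 1 - \<delta>\<close> \<open>norm x = 1\<close> show "x \<in> almost_norming_set G2 \<delta>"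
      by (simp add: almost_norming_set_def)
  qed
  with t show "\<exists>\<delta>'>0. almost_norming_set G1 \<delta>' \<subseteq> almost_norming_set G2 \<delta>"
    by (intro exI[of _ "1 - t"]) auto
qed

end
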